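(* For every integer $r \geq 3$ and every positive integer $n$, $$g'(r,n)\geq \frac{2n}{r+1}-\frac{\binom{2r}{r}}{r+1}.$$
   Context: A hypergraph is $r$-uniform if every edge contains exactly $r$ vertices. A matching is a set of pairwise vertex-disjoint edges. Given a collection (family, repetitions allowed) of matchings $M_1,\dots,M_n$ in a hypergraph (not necessarily disjoint from one another), a matching $M\subseteq \bigcup_{i=1}^n M_i$ is called rainbow if there is an injection $\phi:M\to[n]$ such that every edge $e\in M$ belongs to $M_{\phi(e)}$. $g'(r,n)$ denotes the largest integer $s$ such that every collection of $n$ matchings, each of size $n$, in an $r$-uniform hypergraph admits a rainbow matching of size $s$. *)

theory Defs
  imports Complex_Main
begin

text \<open>Hypergraphs on vertex type nat (every finite hypergraph embeds into nat).
  An edge is a set of vertices; a matching is a set of pairwise disjoint edges.\<close>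

definition is_matching :: "nat set set \<Rightarrow> bool" where
  "is_matching M \<longleftrightarrow> (\<forall>e\<in>M. \<forall>f\<in>M. e \<noteq> f \<longrightarrow> e \<inter> f = {})"

definition uniform :: "nat \<Rightarrow> nat set set \<Rightarrow> bool" where
  "uniform r E \<longleftrightarrow> (\<forall>e\<in>E. card e = r)"

definition has_rainbow_matching :: "nat \<Rightarrow> (nat \<Rightarrow> nat set set) \<Rightarrow> nat \<Rightarrow> bool" where
  "has_rainbow_matching n Ms s \<longleftrightarrow>
     (\<exists>M. M \<subseteq> (\<Union>i<n. Ms i) \<and> is_matching M \<and> finite M \<and> card M = s \<and>
        (\<exists>\<phi>. inj_on \<phi> M \<and> (\<forall>e\<in>M. \<phi> e < n \<and> e \<in> Ms (\<phi> e))))"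

definition g' :: "nat \<Rightarrow> nat \<Rightarrow> nat" where
  "g' r n = (GREATEST s. \<forall>Ms. (\<forall>i<n. is_matching (Ms i) \<and> finite (Ms i) \<and> card (Ms i) = n
                                      \<and> uniform r (Ms i))
                              \<longrightarrow> has_rainbow_matching n Ms s)"

end

theory Submission
  imports Defs
begin

text \<open>Let M be a rainbow matching of maximum size s. By maximality every edge of an unused
  colour u meets M; call it private if it meets exactly one edge of M. An edge of M has r vertices,
  so it meets at most r edges of the matching of colour u, and double counting gives
  2n \<le> r s + p_u, where p_u is the number of private edges of colour u; moreover
  p_u \<le> s + (r - 1) w_u, where w_u counts the edges of M met by at least two of them.
  Two private edges of distinct unused colours through the same edge e of M must intersect, since
  otherwise replacing e by both would enlarge M. Hence two private edges through e for each of the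
  colours counted, taken in both orders, form a Bollobas system of pairs of r-sets, and by
  Bollobas's theorem at most C(2r,r)/2 unused colours have two private edges through e. Summing
  over the n - s unused colours yields 2(n-s) 2n \<le> 2(n-s)(r+1)s + (r-1) s C(2r,r), which forces
  2n \<le> (r+1)s + C(2r,r).\<close>

lemma sum_inverse_binomial_delete_vertex:
  assumes "finite X" "A \<subseteq> X" "B \<subseteq> X" "A \<inter> B = {}" "B \<noteq> {}"
  shows "(\<Sum>x\<in>X - A. 1 / real ((card A + card (B - {x})) choose card A))
         = real (card X) / real ((card A + card B) choose card A)"
proof -
  define a b where "a = card A" and "b = card B"
  have fin: "finite A" "finite B" using assms(1-3) finite_subset by auto
  have b_pos: "b \<ge> 1" using fin assms(5) b_def by (simp add: Suc_le_eq card_gt_0_iff)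
  have ab_le: "a + b \<le> card X"
    using assms fin a_def b_def by (metis Un_least card_Un_disjoint card_mono)
  have absorb: "real b / real ((a + b - 1) choose a) = real (a + b) / real ((a + b) choose a)"
  proof -
    have "real b * real ((a + b) choose a) = real (a + b) * real ((a + b - 1) choose a)"
      using binomial_absorb_comp[of "a + b" a] by (metis add_diff_cancel_left' of_nat_mult)
    moreover have "real ((a + b - 1) choose a) > 0" using b_pos by simp
    ultimately show ?thesis by (simp add: field_simps)
  qed
  have on_B: "(\<Sum>x\<in>B. 1 / real ((a + card (B - {x})) choose a)) = real b / real ((a + b - 1) choose a)"
    using fin b_pos by (simp add: b_def)
  have off_B: "(\<Sum>x\<in>X - (A \<union> B). 1 / real ((a + card (B - {x})) choose a))
      = real (card X - (a + b)) / real ((a + b) choose a)"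
    using assms fin by (simp add: a_def b_def card_Diff_subset card_Un_disjoint)
  have split: "X - A = B \<union> (X - (A \<union> B))" using assms(3,4) by auto
  have "(\<Sum>x\<in>X - A. 1 / real ((a + card (B - {x})) choose a))
      = (\<Sum>x\<in>B. 1 / real ((a + card (B - {x})) choose a))
        + (\<Sum>x\<in>X - (A \<union> B). 1 / real ((a + card (B - {x})) choose a))"
    unfolding split by (rule sum.union_disjoint) (use assms(1) fin in auto)
  also have "\<dots> = real b / real ((a + b - 1) choose a)
                   + real (card X - (a + b)) / real ((a + b) choose a)"
    using on_B off_B by simp
  also have "\<dots> = real (card X) / real ((a + b) choose a)"
    unfolding absorb using ab_le by (simp add: add_divide_distrib[symmetric] of_nat_diff)
  finally show ?thesis by (simp add: a_def b_def)
qed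

theorem bollobas_inequality:
  assumes "finite X" "finite I"
    and "\<And>i. i \<in> I \<Longrightarrow> A i \<subseteq> X \<and> B i \<subseteq> X \<and> A i \<inter> B i = {}"
    and "\<And>i j. i \<in> I \<Longrightarrow> j \<in> I \<Longrightarrow> i \<noteq> j \<Longrightarrow> A i \<inter> B j \<noteq> {}"
  shows "(\<Sum>i\<in>I. 1 / real ((card (A i) + card (B i)) choose card (A i))) \<le> 1"
  using assms
proof (induction "card X" arbitrary: X I B rule: less_induct)
  case less
  show ?case
  proof (cases "\<exists>i\<in>I. B i = {}")
    case True
    then obtain i where "i \<in> I" "B i = {}" by blast
    with less.prems(4) have "I = {i}" by blast
    with \<open>B i = {}\<close> show ?thesis by simp
  next
    case B_nonempty: False
    define w where "w i = 1 / real ((card (A i) + card (B i)) choose card (A i))" for i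
    (* Deleting a vertex x, the pairs (A i, B i - {x}) with x \<notin> A i form a smaller system
       of the same kind; summed over x, the weight of each pair is recovered card X times. *)
    have delete: "(\<Sum>i\<in>{i\<in>I. x \<notin> A i}. 1 / real ((card (A i) + card (B i - {x})) choose card (A i))) \<le> 1"
      if "x \<in> X" for x
    proof (rule less.hyps[of "X - {x}" "{i\<in>I. x \<notin> A i}" "\<lambda>i. B i - {x}"])
      show "card (X - {x}) < card X" using less.prems(1) that by (rule card_Diff1_less)
      show "A i \<inter> (B j - {x}) \<noteq> {}"
        if "i \<in> {i\<in>I. x \<notin> A i}" "j \<in> {i\<in>I. x \<notin> A i}" "i \<noteq> j" for i j
        using less.prems(4)[of i j] that by auto
    qed (use less.prems that in auto)
    have "(\<Sum>i\<in>I. real (card X) * w i)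
        = (\<Sum>i\<in>I. \<Sum>x\<in>X - A i. 1 / real ((card (A i) + card (B i - {x})) choose card (A i)))"
      using less.prems(1,3) B_nonempty
      by (intro sum.cong) (simp_all add: w_def sum_inverse_binomial_delete_vertex)
    also have "\<dots> = (\<Sum>x\<in>X. \<Sum>i\<in>{i\<in>I. x \<notin> A i}. 1 / real ((card (A i) + card (B i - {x})) choose card (A i)))"
      using sum.swap_restrict[OF less.prems(2,1)] by (simp add: set_diff_eq)
    also have "\<dots> \<le> real (card X)"
      using sum_mono[OF delete] by simp
    finally have weighted: "real (card X) * sum w I \<le> real (card X) * 1"
      by (simp add: sum_distrib_left)
    have "sum w I \<le> 1"
    proof (cases "I = {}")
      case False
      then obtain i where "i \<in> I" by blast
      then have "B i \<subseteq> X" "B i \<noteq> {}" using less.prems(3) B_nonempty by auto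
      then have "real (card X) > 0" using less.prems(1) card_gt_0_iff by fastforce
      with weighted show ?thesis by simp
    qed simp
    then show ?thesis by (simp add: w_def)
  qed
qed

corollary bollobas_card_le:
  assumes "finite I"
    and "\<And>i. i \<in> I \<Longrightarrow> finite (A i) \<and> finite (B i) \<and> card (A i) = a \<and> card (B i) = b \<and> A i \<inter> B i = {}"
    and "\<And>i j. i \<in> I \<Longrightarrow> j \<in> I \<Longrightarrow> i \<noteq> j \<Longrightarrow> A i \<inter> B j \<noteq> {}"
  shows "card I \<le> (a + b) choose a"
proof -
  have "real (card I) / real ((a + b) choose a)
        = (\<Sum>i\<in>I. 1 / real ((card (A i) + card (B i)) choose card (A i)))"
    using assms(2) by simp
  also have "\<dots> \<le> 1"
  proof (rule bollobas_inequality)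
    show "finite (\<Union>i\<in>I. A i \<union> B i)" using assms(1,2) by blast
    show "A i \<subseteq> (\<Union>i\<in>I. A i \<union> B i) \<and> B i \<subseteq> (\<Union>i\<in>I. A i \<union> B i) \<and> A i \<inter> B i = {}"
      if "i \<in> I" for i
      using assms(2) that by blast
  qed (use assms(1,3) in auto)
  finally show ?thesis by (simp add: divide_le_eq)
qed

corollary bollobas_card_le_symmetric:
  assumes "finite W" "r \<ge> 1"
    and "\<And>u. u \<in> W \<Longrightarrow> finite (F u) \<and> finite (G u) \<and> card (F u) = r \<and> card (G u) = r \<and> F u \<inter> G u = {}"
    and "\<And>u u'. u \<in> W \<Longrightarrow> u' \<in> W \<Longrightarrow> u \<noteq> u' \<Longrightarrow>
           F u \<inter> F u' \<noteq> {} \<and> F u \<inter> G u' \<noteq> {} \<and> G u \<inter> G u' \<noteq> {}"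
  shows "2 * card W \<le> (2 * r) choose r"
proof -
  define A where "A = (\<lambda>(u, b). if b then F u else G u)"
  define B where "B = (\<lambda>(u, b). if b then G u else F u)"
  have "card (W \<times> (UNIV :: bool set)) \<le> (r + r) choose r"
  proof (rule bollobas_card_le)
    show "finite (W \<times> (UNIV :: bool set))" using assms(1) by simp
    show "finite (A i) \<and> finite (B i) \<and> card (A i) = r \<and> card (B i) = r \<and> A i \<inter> B i = {}"
      if i: "i \<in> W \<times> UNIV" for i
    proof -
      obtain u b where "i = (u, b)" "u \<in> W" using i by auto
      then show ?thesis using assms(3)[of u] unfolding A_def B_def by (cases b) (auto simp: Int_commute)
    qed
    show "A i \<inter> B j \<noteq> {}" if ij: "i \<in> W \<times> UNIV" "j \<in> W \<times> UNIV" "i \<noteq> j" for i j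
    proof -
      obtain u b u' b' where uv: "i = (u, b)" "j = (u', b')" "u \<in> W" "u' \<in> W" using ij(1,2) by auto
      show ?thesis
      proof (cases "u = u'")
        case True
        then have "B j = A i" using ij(3) unfolding uv A_def B_def by auto
        moreover have "A i \<noteq> {}"
          using assms(2) assms(3)[OF uv(3)] unfolding uv(1) A_def by auto
        ultimately show ?thesis by simp
      next
        case False
        then show ?thesis
          using assms(4)[OF uv(3,4)] assms(4)[OF uv(4,3)] unfolding uv A_def B_def by (auto simp: Int_commute)
      qed
    qed
  qed
  then show ?thesis by (simp add: card_cartesian_product mult_2)
qed

lemma card_matching_edges_meeting_le:
  assumes "is_matching F" "finite e"
  shows "card {f\<in>F. f \<inter> e \<noteq> {}} \<le> card e"
proof -
  let ?F = "{f\<in>F. f \<inter> e \<noteq> {}}"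
  let ?pick = "\<lambda>f. SOME x. x \<in> f \<inter> e"
  have pick: "?pick f \<in> f \<inter> e" if "f \<in> ?F" for f
  proof -
    from that obtain x where "x \<in> f \<inter> e" by blast
    then show ?thesis by (rule someI)
  qed
  have "inj_on ?pick ?F"
  proof (rule inj_onI)
    fix f g assume "f \<in> ?F" "g \<in> ?F" "?pick f = ?pick g"
    then have "f \<inter> g \<noteq> {}" using pick[of f] pick[of g] by auto
    with \<open>f \<in> ?F\<close> \<open>g \<in> ?F\<close> show "f = g"
      using assms(1) unfolding is_matching_def by auto
  qed
  moreover have "?pick ` ?F \<subseteq> e" using pick by auto
  ultimately show ?thesis using assms(2) by (rule card_inj_on_le)
qed

definition rainbow_matching :: "nat \<Rightarrow> (nat \<Rightarrow> nat set set) \<Rightarrow> nat set set \<Rightarrow> (nat set \<Rightarrow> nat) \<Rightarrow> bool" where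
  "rainbow_matching n Ms M \<phi> \<longleftrightarrow>
     is_matching M \<and> finite M \<and> inj_on \<phi> M \<and> (\<forall>e\<in>M. \<phi> e < n \<and> e \<in> Ms (\<phi> e))"

definition uniform_matching_family :: "nat \<Rightarrow> nat \<Rightarrow> (nat \<Rightarrow> nat set set) \<Rightarrow> bool" where
  "uniform_matching_family r n Ms \<longleftrightarrow>
     (\<forall>i<n. is_matching (Ms i) \<and> finite (Ms i) \<and> card (Ms i) = n \<and> uniform r (Ms i))"

lemma has_rainbow_matching_iff:
  "has_rainbow_matching n Ms s \<longleftrightarrow> (\<exists>M \<phi>. rainbow_matching n Ms M \<phi> \<and> card M = s)"
  unfolding has_rainbow_matching_def rainbow_matching_def by blast

lemma rainbow_matching_card_le:
  assumes "rainbow_matching n Ms M \<phi>"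
  shows "card M \<le> n"
proof -
  have "card M = card (\<phi> ` M)"
    using assms unfolding rainbow_matching_def by (simp add: card_image)
  also have "\<dots> \<le> card {..<n}"
    using assms unfolding rainbow_matching_def by (intro card_mono) auto
  finally show ?thesis by simp
qed

lemma rainbow_matching_subset:
  assumes "rainbow_matching n Ms M \<phi>" "M' \<subseteq> M"
  shows "rainbow_matching n Ms M' \<phi>"
  using assms unfolding rainbow_matching_def is_matching_def
  by (auto intro: inj_on_subset finite_subset)

lemma rainbow_matching_insert:
  assumes "rainbow_matching n Ms M \<phi>" "u < n" "u \<notin> \<phi> ` M" "f \<in> Ms u"
    and "f \<noteq> {}" "f \<inter> \<Union>M = {}"
  shows "rainbow_matching n Ms (insert f M) (\<phi>(f := u))" "card (insert f M) = Suc (card M)"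
proof -
  have "f \<notin> M" using assms(5,6) by blast
  then have "inj_on (\<phi>(f := u)) M" "\<phi>(f := u) ` M = \<phi> ` M"
    using assms(1) unfolding rainbow_matching_def by (auto simp: inj_on_def)
  with \<open>f \<notin> M\<close> assms show "rainbow_matching n Ms (insert f M) (\<phi>(f := u))"
    unfolding rainbow_matching_def is_matching_def by auto
  show "card (insert f M) = Suc (card M)"
    using \<open>f \<notin> M\<close> assms(1) unfolding rainbow_matching_def by simp
qed

lemma ex_maximum_rainbow_matching:
  obtains M \<phi> where "rainbow_matching n Ms M \<phi>"
    "\<And>M' \<phi>'. rainbow_matching n Ms M' \<phi>' \<Longrightarrow> card M' \<le> card M"
proof -
  let ?P = "\<lambda>(M, \<phi>). rainbow_matching n Ms M \<phi>"
  have "?P ({}, \<phi>)" for \<phi>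
    unfolding rainbow_matching_def is_matching_def by simp
  moreover have "\<forall>M\<phi>. ?P M\<phi> \<longrightarrow> card (fst M\<phi>) < Suc n"
    using rainbow_matching_card_le by (auto simp: less_Suc_eq_le)
  ultimately obtain M\<phi> where "?P M\<phi>" "\<forall>M\<phi>'. ?P M\<phi>' \<longrightarrow> card (fst M\<phi>') \<le> card (fst M\<phi>)"
    using ex_has_greatest_nat[of ?P _ "\<lambda>M\<phi>. card (fst M\<phi>)"] by blast
  then show ?thesis by (intro that[of "fst M\<phi>" "snd M\<phi>"]) (auto simp: case_prod_beta)
qed

lemma sum_card_incidences_swap:
  assumes "finite A" "finite B"
  shows "(\<Sum>a\<in>A. card {b\<in>B. R a b}) = (\<Sum>b\<in>B. card {a\<in>A. R a b})"
  using sum.swap_restrict[OF assms, of "\<lambda>_ _. 1::nat" R] by simp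

lemma le_of_quadratic_le:
  fixes x q C :: int
  assumes "(x + q) * x \<le> q * C" "q \<ge> 0" "C \<ge> 0"
  shows "x \<le> C"
proof (rule ccontr)
  assume "\<not> x \<le> C"
  then have "q * C \<le> q * x" "0 < x * x" using assms(2,3) by (auto intro: mult_left_mono)
  moreover have "(x + q) * x = x * x + q * x" by (simp add: algebra_simps)
  ultimately have "q * C < (x + q) * x" by linarith
  with assms(1) show False by simp
qed

lemma le_of_quadratic_le_nat:
  fixes n s r C :: nat
  assumes "s \<le> n" "r \<ge> 1"
    and "2 * (n - s) * (2 * n) \<le> 2 * (n - s) * ((r + 1) * s) + (r - 1) * (s * C)"
  shows "2 * n \<le> (r + 1) * s + C"
proof -
  have "int (2 * (n - s) * (2 * n)) \<le> int (2 * (n - s) * ((r + 1) * s) + (r - 1) * (s * C))"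
    using assms(3) by (simp only: of_nat_le_iff)
  moreover have "int (n - s) = int n - int s" "int (r - 1) = int r - 1" using assms(1,2) by auto
  ultimately have "2 * (int n - int s) * (2 * int n)
                   \<le> 2 * (int n - int s) * ((int r + 1) * int s) + (int r - 1) * (int s * int C)"
    by (simp only: of_nat_mult of_nat_add of_nat_1 of_nat_numeral)
  then have "(int (2 * n) - int ((r + 1) * s) + int ((r - 1) * s)) * (int (2 * n) - int ((r + 1) * s))
             \<le> int ((r - 1) * s) * int C"
    using assms(2) by (simp add: of_nat_diff algebra_simps)
  then have "int (2 * n) - int ((r + 1) * s) \<le> int C"
    by (rule le_of_quadratic_le) simp_all
  then show ?thesis by linarith
qed

locale maximum_rainbow_matching =
  fixes r n :: nat and Ms :: "nat \<Rightarrow> nat set set"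
    and M :: "nat set set" and \<phi> :: "nat set \<Rightarrow> nat"
  assumes family: "uniform_matching_family r n Ms"
    and r_pos: "r \<ge> 1"
    and rainbow: "rainbow_matching n Ms M \<phi>"
    and maximum: "\<And>M' \<phi>'. rainbow_matching n Ms M' \<phi>' \<Longrightarrow> card M' \<le> card M"
begin

definition unused_colours :: "nat set" where
  "unused_colours = {..<n} - \<phi> ` M"

definition private_edges :: "nat \<Rightarrow> nat set set" where
  "private_edges u = {f\<in>Ms u. card {e\<in>M. f \<inter> e \<noteq> {}} = 1}"

definition private_degree :: "nat set \<Rightarrow> nat \<Rightarrow> nat" where
  "private_degree e u = card {f\<in>private_edges u. f \<inter> e \<noteq> {}}"

lemma finite_M: "finite M"
  using rainbow unfolding rainbow_matching_def by simp

lemma colour_class: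
  assumes "u < n"
  shows "is_matching (Ms u)" "finite (Ms u)" "card (Ms u) = n"
  using family assms unfolding uniform_matching_family_def by auto

lemma colour_edge:
  assumes "u < n" "f \<in> Ms u"
  shows "card f = r" "finite f" "f \<noteq> {}"
proof -
  show "card f = r" using family assms unfolding uniform_matching_family_def uniform_def by auto
  with r_pos show "finite f" "f \<noteq> {}" by (auto intro: card_ge_0_finite)
qed

lemma matching_edge:
  assumes "e \<in> M"
  shows "card e = r" "finite e"
  using rainbow assms colour_edge unfolding rainbow_matching_def by auto

lemma card_colour_edges_meeting_le:
  assumes "u < n" "e \<in> M"
  shows "card {f\<in>Ms u. f \<inter> e \<noteq> {}} \<le> r"
  using card_matching_edges_meeting_le[OF colour_class(1)[OF assms(1)] matching_edge(2)[OF assms(2)]]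
    matching_edge(1)[OF assms(2)] by simp

lemma unused_colour_edge_meets_M:
  assumes "u \<in> unused_colours" "f \<in> Ms u"
  shows "\<exists>e\<in>M. f \<inter> e \<noteq> {}"
proof (rule ccontr)
  assume "\<not> (\<exists>e\<in>M. f \<inter> e \<noteq> {})"
  then have "f \<inter> \<Union>M = {}" by blast
  moreover have u: "u < n" "u \<notin> \<phi> ` M" using assms(1) unfolding unused_colours_def by auto
  ultimately have "rainbow_matching n Ms (insert f M) (\<phi>(f := u))" "card (insert f M) = Suc (card M)"
    using rainbow_matching_insert[OF rainbow u assms(2) colour_edge(3)[OF u(1) assms(2)]] by auto
  then show False using maximum[of "insert f M" "\<phi>(f := u)"] by simp
qed

lemma private_edge_avoids_others:
  assumes "f \<in> private_edges u" "e \<in> M" "f \<inter> e \<noteq> {}"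
  shows "f \<inter> \<Union>(M - {e}) = {}"
proof -
  have "card {e\<in>M. f \<inter> e \<noteq> {}} = 1" using assms(1) unfolding private_edges_def by simp
  then obtain e' where "{e\<in>M. f \<inter> e \<noteq> {}} = {e'}" by (rule card_1_singletonE)
  then have "e'' = e'" if "e'' \<in> M" "f \<inter> e'' \<noteq> {}" for e''
    using that by (metis (mono_tags, lifting) mem_Collect_eq singletonD)
  with assms(2,3) show ?thesis by blast
qed

text \<open>Exchanging e for two disjoint private edges of distinct unused colours would enlarge M.\<close>

lemma private_edges_intersect:
  assumes e: "e \<in> M" and u: "u \<in> unused_colours" "u' \<in> unused_colours" "u \<noteq> u'"
    and f: "f \<in> private_edges u" "f \<inter> e \<noteq> {}"
    and g: "g \<in> private_edges u'" "g \<inter> e \<noteq> {}"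
  shows "f \<inter> g \<noteq> {}"
proof
  assume disjoint: "f \<inter> g = {}"
  define M\<^sub>0 where "M\<^sub>0 = M - {e}"
  define \<psi> where "\<psi> = \<phi>(g := u')"
  have colours: "u < n" "u' < n" "u \<notin> \<phi> ` M" "u' \<notin> \<phi> ` M"
    using u(1,2) unfolding unused_colours_def by auto
  have edges: "f \<in> Ms u" "g \<in> Ms u'"
    using f(1) g(1) unfolding private_edges_def by auto
  have rainbow\<^sub>0: "rainbow_matching n Ms M\<^sub>0 \<phi>"
    unfolding M\<^sub>0_def by (rule rainbow_matching_subset[OF rainbow]) auto
  have "u' \<notin> \<phi> ` M\<^sub>0" using colours(4) unfolding M\<^sub>0_def by auto
  moreover have "g \<inter> \<Union>M\<^sub>0 = {}"
    unfolding M\<^sub>0_def by (rule private_edge_avoids_others[OF g(1) e g(2)])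
  ultimately have rainbow\<^sub>1: "rainbow_matching n Ms (insert g M\<^sub>0) \<psi>"
    and card\<^sub>1: "card (insert g M\<^sub>0) = Suc (card M\<^sub>0)"
    using rainbow_matching_insert[OF rainbow\<^sub>0 colours(2) _ edges(2) colour_edge(3)[OF colours(2) edges(2)]]
    unfolding \<psi>_def by auto
  have "\<psi> ` insert g M\<^sub>0 \<subseteq> insert u' (\<phi> ` M)" unfolding \<psi>_def M\<^sub>0_def by auto
  then have "u \<notin> \<psi> ` insert g M\<^sub>0" using colours(3) u(3) by auto
  moreover have "f \<inter> \<Union>(insert g M\<^sub>0) = {}"
    using disjoint private_edge_avoids_others[OF f(1) e f(2)] unfolding M\<^sub>0_def by auto
  ultimately have "rainbow_matching n Ms (insert f (insert g M\<^sub>0)) (\<psi>(f := u))"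
    and "card (insert f (insert g M\<^sub>0)) = Suc (Suc (card M\<^sub>0))"
    using rainbow_matching_insert[OF rainbow\<^sub>1 colours(1) _ edges(1) colour_edge(3)[OF colours(1) edges(1)]] card\<^sub>1
    by auto
  moreover have "Suc (card M\<^sub>0) = card M"
    unfolding M\<^sub>0_def by (rule card_Suc_Diff1[OF finite_M e])
  ultimately show False
    using maximum[of "insert f (insert g M\<^sub>0)" "\<psi>(f := u)"] by simp
qed

lemma card_private_edges_ge:
  assumes "u \<in> unused_colours"
  shows "2 * n \<le> r * card M + card (private_edges u)"
proof -
  have u: "u < n" using assms unfolding unused_colours_def by simp
  let ?hits = "\<lambda>f. card {e\<in>M. f \<inter> e \<noteq> {}}"
  have "2 \<le> ?hits f + of_bool (f \<in> private_edges u)" if "f \<in> Ms u" for f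
  proof -
    have "{e\<in>M. f \<inter> e \<noteq> {}} \<noteq> {}" using unused_colour_edge_meets_M[OF assms that] by blast
    then have "?hits f \<ge> 1" using finite_M by (simp add: Suc_le_eq card_gt_0_iff)
    then show ?thesis using that unfolding private_edges_def by auto
  qed
  then have "(\<Sum>f\<in>Ms u. 2) \<le> (\<Sum>f\<in>Ms u. ?hits f + of_bool (f \<in> private_edges u))"
    by (rule sum_mono)
  also have "\<dots> = (\<Sum>f\<in>Ms u. ?hits f) + card (private_edges u)"
    using colour_class(2)[OF u] by (simp add: sum.distrib private_edges_def Int_def)
  also have "(\<Sum>f\<in>Ms u. ?hits f) = (\<Sum>e\<in>M. card {f\<in>Ms u. f \<inter> e \<noteq> {}})"
    by (rule sum_card_incidences_swap[OF colour_class(2)[OF u] finite_M])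
  also have "\<dots> \<le> (\<Sum>e\<in>M. r)"
    by (rule sum_mono) (rule card_colour_edges_meeting_le[OF u])
  finally show ?thesis using colour_class(3)[OF u] by (simp add: mult.commute)
qed

lemma card_private_edges_le:
  assumes "u \<in> unused_colours"
  shows "card (private_edges u) \<le> card M + (r - 1) * card {e\<in>M. private_degree e u \<ge> 2}"
proof -
  have u: "u < n" using assms unfolding unused_colours_def by simp
  have finite_private: "finite (private_edges u)"
    using colour_class(2)[OF u] unfolding private_edges_def by simp
  have degree_le: "private_degree e u \<le> 1 + (r - 1) * of_bool (private_degree e u \<ge> 2)" if "e \<in> M" for e
  proof -
    have "private_degree e u \<le> card {f\<in>Ms u. f \<inter> e \<noteq> {}}"
      unfolding private_degree_def private_edges_def
      by (rule card_mono) (auto simp: colour_class(2)[OF u])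
    also have "\<dots> \<le> r" by (rule card_colour_edges_meeting_le[OF u that])
    finally show ?thesis by auto
  qed
  have "card (private_edges u) = (\<Sum>f\<in>private_edges u. card {e\<in>M. f \<inter> e \<noteq> {}})"
    unfolding private_edges_def by simp
  also have "\<dots> = (\<Sum>e\<in>M. private_degree e u)"
    unfolding private_degree_def by (rule sum_card_incidences_swap[OF finite_private finite_M])
  also have "\<dots> \<le> (\<Sum>e\<in>M. 1 + (r - 1) * of_bool (private_degree e u \<ge> 2))"
    by (rule sum_mono) (rule degree_le)
  also have "\<dots> = card M + (r - 1) * card {e\<in>M. private_degree e u \<ge> 2}"
    using finite_M by (simp only: sum.distrib sum_distrib_left[symmetric]) (simp add: Int_def)
  finally show ?thesis .
qed

lemma card_colours_two_private_edges_le: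
  assumes e: "e \<in> M"
  shows "2 * card {u\<in>unused_colours. private_degree e u \<ge> 2} \<le> (2 * r) choose r"
proof -
  define W where "W = {u\<in>unused_colours. private_degree e u \<ge> 2}"
  define S where "S u = {f\<in>private_edges u. f \<inter> e \<noteq> {}}" for u
  have "\<exists>f g. f \<in> S u \<and> g \<in> S u \<and> f \<noteq> g" if "u \<in> W" for u
  proof -
    have "2 \<le> card (S u)" using that unfolding W_def S_def private_degree_def by simp
    then obtain T where "T \<subseteq> S u" "card T = 2" by (metis obtain_subset_with_card_n)
    then show ?thesis unfolding card_2_iff by blast
  qed
  then obtain f g where fg: "\<And>u. u \<in> W \<Longrightarrow> f u \<in> S u \<and> g u \<in> S u \<and> f u \<noteq> g u"
    by metis
  have W: "u < n" "u \<in> unused_colours" "f u \<in> Ms u" "g u \<in> Ms u" if "u \<in> W" for u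
    using that fg[OF that] unfolding W_def S_def unused_colours_def private_edges_def by auto
  show ?thesis
    unfolding W_def[symmetric]
  proof (rule bollobas_card_le_symmetric[OF _ r_pos])
    show "finite W" unfolding W_def unused_colours_def by simp
    show "finite (f u) \<and> finite (g u) \<and> card (f u) = r \<and> card (g u) = r \<and> f u \<inter> g u = {}"
      if "u \<in> W" for u
      using colour_edge[OF W(1,3)[OF that]] colour_edge[OF W(1,4)[OF that]] fg[OF that]
        colour_class(1)[OF W(1)[OF that]] W(3,4)[OF that] unfolding is_matching_def by blast
    show "f u \<inter> f u' \<noteq> {} \<and> f u \<inter> g u' \<noteq> {} \<and> g u \<inter> g u' \<noteq> {}"
      if "u \<in> W" "u' \<in> W" "u \<noteq> u'" for u u'
      using private_edges_intersect[OF e W(2)[OF that(1)] W(2)[OF that(2)] that(3)]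
        fg[OF that(1)] fg[OF that(2)] unfolding S_def by blast
  qed
qed

lemma card_M_lower_bound:
  "2 * n \<le> (r + 1) * card M + (2 * r choose r)"
proof -
  define s C where "s = card M" and "C = 2 * r choose r"
  define w where "w u = card {e\<in>M. private_degree e u \<ge> 2}" for u
  let ?U = "unused_colours"
  have finite_U: "finite ?U" unfolding unused_colours_def by simp
  have "\<phi> ` M \<subseteq> {..<n}" "card (\<phi> ` M) = s"
    using rainbow unfolding rainbow_matching_def s_def by (auto simp: card_image)
  then have card_U: "card ?U = n - s"
    unfolding unused_colours_def by (simp add: card_Diff_subset finite_M)
  have s_le: "s \<le> n" using rainbow_matching_card_le[OF rainbow] s_def by simp
  have "2 * n \<le> (r + 1) * s + (r - 1) * w u" if "u \<in> ?U" for u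
    using card_private_edges_ge[OF that] card_private_edges_le[OF that] unfolding s_def w_def by simp
  then have "(\<Sum>u\<in>?U. 2 * n) \<le> (\<Sum>u\<in>?U. (r + 1) * s + (r - 1) * w u)"
    by (rule sum_mono)
  then have by_colours: "card ?U * (2 * n) \<le> card ?U * ((r + 1) * s) + (r - 1) * (\<Sum>u\<in>?U. w u)"
    by (simp add: sum.distrib sum_distrib_left)
  have "2 * (\<Sum>u\<in>?U. w u) = (\<Sum>e\<in>M. 2 * card {u\<in>?U. private_degree e u \<ge> 2})"
    unfolding w_def sum_card_incidences_swap[OF finite_U finite_M] by (simp add: sum_distrib_left)
  also have "\<dots> \<le> (\<Sum>e\<in>M. C)"
    unfolding C_def by (rule sum_mono) (rule card_colours_two_private_edges_le)
  finally have by_edges: "2 * (\<Sum>u\<in>?U. w u) \<le> s * C" unfolding s_def by simp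
  have "2 * card ?U * (2 * n) \<le> 2 * card ?U * ((r + 1) * s) + (r - 1) * (2 * (\<Sum>u\<in>?U. w u))"
    using by_colours by (simp add: algebra_simps)
  also have "\<dots> \<le> 2 * card ?U * ((r + 1) * s) + (r - 1) * (s * C)"
    using by_edges by simp
  finally have "2 * (n - s) * (2 * n) \<le> 2 * (n - s) * ((r + 1) * s) + (r - 1) * (s * C)"
    unfolding card_U .
  with s_le r_pos show ?thesis
    unfolding s_def C_def by (rule le_of_quadratic_le_nat)
qed

end

lemma ex_large_rainbow_matching:
  assumes "uniform_matching_family r n Ms" "r \<ge> 1"
  shows "\<exists>M \<phi>. rainbow_matching n Ms M \<phi> \<and> 2 * n \<le> (r + 1) * card M + (2 * r choose r)"
proof -
  obtain M \<phi> where "rainbow_matching n Ms M \<phi>"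
    "\<And>M' \<phi>'. rainbow_matching n Ms M' \<phi>' \<Longrightarrow> card M' \<le> card M"
    using ex_maximum_rainbow_matching by blast
  with assms interpret maximum_rainbow_matching r n Ms M \<phi>
    by unfold_locales
  show ?thesis using rainbow card_M_lower_bound by blast
qed

lemma uniform_matching_family_intervals:
  assumes "r \<ge> 1"
  shows "uniform_matching_family r n (\<lambda>_. (\<lambda>j. {j * r..<(j + 1) * r}) ` {..<n})"
proof -
  have block: "x div r = j" if "x \<in> {j * r..<(j + 1) * r}" for x j
    using that by (intro div_nat_eqI) (auto simp: mult.commute)
  have "inj_on (\<lambda>j. {j * r..<(j + 1) * r}) {..<n}"
  proof (rule inj_onI)
    fix j j' assume same: "{j * r..<(j + 1) * r} = {j' * r..<(j' + 1) * r}"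
    have "j * r \<in> {j * r..<(j + 1) * r}" using assms by simp
    then have "j * r \<in> {j' * r..<(j' + 1) * r}" unfolding same .
    then show "j = j'" using block[of "j * r" j'] assms by simp
  qed
  moreover have "is_matching ((\<lambda>j. {j * r..<(j + 1) * r}) ` {..<n})"
    unfolding is_matching_def using block by blast
  ultimately show ?thesis
    unfolding uniform_matching_family_def uniform_def by (simp add: card_image)
qed

lemma le_g'I:
  assumes "r \<ge> 1"
    and "\<And>Ms. uniform_matching_family r n Ms \<Longrightarrow> \<exists>M \<phi>. rainbow_matching n Ms M \<phi> \<and> t \<le> card M"
  shows "t \<le> g' r n"
proof -
  let ?P = "\<lambda>s. \<forall>Ms. uniform_matching_family r n Ms \<longrightarrow> has_rainbow_matching n Ms s"
  have "?P t"
  proof (intro allI impI)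
    fix Ms assume "uniform_matching_family r n Ms"
    then obtain M \<phi> where M: "rainbow_matching n Ms M \<phi>" "t \<le> card M" using assms(2) by blast
    then obtain M' where "M' \<subseteq> M" "card M' = t" by (metis obtain_subset_with_card_n)
    then have "rainbow_matching n Ms M' \<phi> \<and> card M' = t" using rainbow_matching_subset[OF M(1)] by simp
    then show "has_rainbow_matching n Ms t" unfolding has_rainbow_matching_iff by blast
  qed
  moreover have "s \<le> n" if "?P s" for s
  proof -
    (* GREATEST needs a bound: n disjoint blocks of r consecutive vertices form a valid family. *)
    from that uniform_matching_family_intervals[OF assms(1)]
    obtain M \<phi> where "rainbow_matching n (\<lambda>_. (\<lambda>j. {j * r..<(j + 1) * r}) ` {..<n}) M \<phi>" "card M = s"
      unfolding has_rainbow_matching_iff by blast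
    then show ?thesis using rainbow_matching_card_le by blast
  qed
  ultimately have "t \<le> Greatest ?P" by (rule Greatest_le_nat)
  then show ?thesis unfolding g'_def uniform_matching_family_def .
qed

theorem theorem1p6:
  fixes r n :: nat
  assumes "r \<ge> 3" and "n \<ge> 1"
  shows "real (g' r n) \<ge> 2 * real n / (real r + 1) - real (2 * r choose r) / (real r + 1)"
proof -
  define b where "b = (2 * real n - real (2 * r choose r)) / (real r + 1)"
  have "nat \<lceil>b\<rceil> \<le> g' r n"
  proof (rule le_g'I)
    show "r \<ge> 1" using assms(1) by simp
    fix Ms assume "uniform_matching_family r n Ms"
    with \<open>r \<ge> 1\<close> obtain M \<phi> where M: "rainbow_matching n Ms M \<phi>"
      and "2 * n \<le> (r + 1) * card M + (2 * r choose r)"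
      using ex_large_rainbow_matching by blast
    then have "real (2 * n) \<le> real ((r + 1) * card M + (2 * r choose r))"
      by (simp only: of_nat_le_iff)
    then have "2 * real n - real (2 * r choose r) \<le> real (card M) * (real r + 1)"
      by (simp add: algebra_simps)
    then have "nat \<lceil>b\<rceil> \<le> card M" unfolding b_def by (simp add: pos_divide_le_eq)
    with M show "\<exists>M \<phi>. rainbow_matching n Ms M \<phi> \<and> nat \<lceil>b\<rceil> \<le> card M" by blast
  qed
  then have "b \<le> real (g' r n)" using real_nat_ceiling_ge[of b] by linarith
  then show ?thesis unfolding b_def by (simp add: diff_divide_distrib)
qed

end
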